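(* Suppose there exist vectors $\mathbf{v}_{1},\dots,\mathbf{v}_{N}\in\mathbb{C}^{2N}$ such that, with $\mathbf{u}_{n}=\bm{\Gamma}\mathbf{v}_{n}^{*}$: (a) the $2N$ vectors $\mathbf{v}_{1},\dots,\mathbf{v}_{N},\mathbf{u}_{1},\dots,\mathbf{u}_{N}$ are eigenvectors of $\mathbf{D}$ and are mutually $\mathbf{R}$-orthogonal (any two distinct ones have $\mathbf{R}$-inner product $0$); (b) $\langle\mathbf{v}_{n},\mathbf{v}_{n}\rangle=1$ for each $n$; (c) the eigenvalue $\mu_{n}$ of $\mathbf{D}$ associated with $\mathbf{v}_{n}$ is positive for each $n$. Then there exists a normal mode transformation $\mathbf{T}$ whose numbers $\mu_{1},\dots,\mu_{N}$ are the eigenvalues of $\mathbf{D}$ associated with $\mathbf{v}_{1},\dots,\mathbf{v}_{N}$.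
   Context: Fix an integer $N\ge 1$, real numbers $v$ with $|v|<1$, $L>0$, $L_{\star}\ge 0$, an integer $M\ge 1$ and real coefficients $c_{1}=1,c_{2},\dots,c_{M}$. Let $F(k)=\sum_{i=1}^{M}(-1)^{i-1}c_{i}L_{\star}^{2i-2}k^{2i-1}$ and $k_{n}=n\pi/L$, and assume $F(k_{n})^{2}\neq v^{2}k_{n}^{2}$ for $n=1,\dots,N$. Put $u_{n}=\sqrt{|F(k_{n})^{2}-v^{2}k_{n}^{2}|}/k_{n}>0$, and $\varepsilon_{n}=1$ if $F(k_{n})^{2}-v^{2}k_{n}^{2}>0$, $\varepsilon_{n}=0$ otherwise. Define $N\times N$ matrices $\bm\sigma,\bm\rho,\bm\xi$ by $\sigma_{nn}=0$, $\sigma_{nm}=\dfrac{2iv\sqrt{nm}\,[1-(-1)^{n+m}]}{\pi\sqrt{u_{n}u_{m}}\,(m^{2}-n^{2})}$ for $n\neq m$, $\bm\rho=\mathrm{diag}(n u_{n}\varepsilon_{n})$, $\bm\xi=\mathrm{diag}(-n u_{n}(1-\varepsilon_{n}))$. With $\mathbf{I}$ the $N\times N$ identity, define the $2N\times 2N$ matrices $\bm{\Sigma}=\begin{pmatrix}\mathbf{I}&\mathbf{0}\\ \mathbf{0}&-\mathbf{I}\end{pmatrix}$, $\bm{\Gamma}=\begin{pmatrix}\mathbf{0}&\mathbf{I}\\ \mathbf{I}&\mathbf{0}\end{pmatrix}$, $\mathbf{R}=\bm{\Sigma}-\begin{pmatrix}\bm\sigma&\bm\sigma\\ \bm\sigma&\bm\sigma\end{pmatrix}$,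 $\bm{\Omega}=\begin{pmatrix}\bm\rho&\bm\xi\\ \bm\xi&\bm\rho\end{pmatrix}$. Standing assumption: $\mathbf{R}$ is invertible. Let $\mathbf{D}=\mathbf{R}^{-1}\bm{\Omega}$. Here ${}^{*}$ denotes entrywise complex conjugation, ${}^{\mathrm{H}}$ the conjugate transpose, and the $\mathbf{R}$-inner product is $\langle\mathbf{x},\mathbf{y}\rangle=\mathbf{x}^{\mathrm{H}}\mathbf{R}\mathbf{y}$. A normal mode transformation is a $2N\times2N$ matrix $\mathbf{T}$ such that (i) $\mathbf{T}^{\mathrm{H}}\mathbf{R}\mathbf{T}=\bm{\Sigma}$; (ii) $\mathbf{T}=\bm{\Gamma}\mathbf{T}^{*}\bm{\Gamma}$; (iii) $\mathbf{T}^{-1}\mathbf{D}\mathbf{T}=\mathrm{diag}(\mu_{1},\dots,\mu_{N},-\mu_{1},\dots,-\mu_{N})$ for some real numbers $\mu_{n}>0$, where $\mathbf{T}^{-1}=\bm{\Sigma}\mathbf{T}^{\mathrm{H}}\mathbf{R}$. *)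

theory Defs
  imports Complex_Main "Jordan_Normal_Form.Schur_Decomposition" "Jordan_Normal_Form.Char_Poly"
    "Jordan_Normal_Form.Gauss_Jordan_Elimination"
begin

(* Paper indices n = 1..N correspond to 0-based matrix indices n-1.
   Parameters: N, vel (= v), L, Ls (= L_star), M, c (c i for i = 1..M). *)

definition Fk :: "nat \<Rightarrow> (nat \<Rightarrow> real) \<Rightarrow> real \<Rightarrow> real \<Rightarrow> real" where
  "Fk M c Ls k = (\<Sum>i=1..M. (-1) ^ (i - 1) * c i * Ls ^ (2*i - 2) * k ^ (2*i - 1))"

definition kn :: "real \<Rightarrow> nat \<Rightarrow> real" where
  "kn L n = real n * pi / L"

definition disc :: "real \<Rightarrow> real \<Rightarrow> real \<Rightarrow> nat \<Rightarrow> (nat \<Rightarrow> real) \<Rightarrow> nat \<Rightarrow> real" where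
  "disc vel L Ls M c n = (Fk M c Ls (kn L n))\<^sup>2 - vel\<^sup>2 * (kn L n)\<^sup>2"

definition un :: "real \<Rightarrow> real \<Rightarrow> real \<Rightarrow> nat \<Rightarrow> (nat \<Rightarrow> real) \<Rightarrow> nat \<Rightarrow> real" where
  "un vel L Ls M c n = sqrt \<bar>disc vel L Ls M c n\<bar> / kn L n"

definition epsn :: "real \<Rightarrow> real \<Rightarrow> real \<Rightarrow> nat \<Rightarrow> (nat \<Rightarrow> real) \<Rightarrow> nat \<Rightarrow> real" where
  "epsn vel L Ls M c n = (if disc vel L Ls M c n > 0 then 1 else 0)"

definition sigma_mat :: "nat \<Rightarrow> real \<Rightarrow> real \<Rightarrow> real \<Rightarrow> nat \<Rightarrow> (nat \<Rightarrow> real) \<Rightarrow> complex mat" where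
  "sigma_mat N vel L Ls M c = mat N N (\<lambda>(i, j).
     let n = i + 1; m = j + 1; u = un vel L Ls M c in
     if n = m then 0
     else (2 * \<i> * complex_of_real vel * complex_of_real (sqrt (real (n * m)))
            * complex_of_real (1 - (-1) ^ (n + m)))
          / complex_of_real (pi * sqrt (u n * u m) * (real m ^ 2 - real n ^ 2)))"

definition rho_mat :: "nat \<Rightarrow> real \<Rightarrow> real \<Rightarrow> real \<Rightarrow> nat \<Rightarrow> (nat \<Rightarrow> real) \<Rightarrow> complex mat" where
  "rho_mat N vel L Ls M c = mat_diag N (\<lambda>i. complex_of_real
     (real (i + 1) * un vel L Ls M c (i + 1) * epsn vel L Ls M c (i + 1)))"

definition xi_mat :: "nat \<Rightarrow> real \<Rightarrow> real \<Rightarrow> real \<Rightarrow> nat \<Rightarrow> (nat \<Rightarrow> real) \<Rightarrow> complex mat" where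
  "xi_mat N vel L Ls M c = mat_diag N (\<lambda>i. complex_of_real
     (- real (i + 1) * un vel L Ls M c (i + 1) * (1 - epsn vel L Ls M c (i + 1))))"

definition Sigma_mat :: "nat \<Rightarrow> complex mat" where
  "Sigma_mat N = four_block_mat (1\<^sub>m N) (0\<^sub>m N N) (0\<^sub>m N N) (- 1\<^sub>m N)"

definition Gamma_mat :: "nat \<Rightarrow> complex mat" where
  "Gamma_mat N = four_block_mat (0\<^sub>m N N) (1\<^sub>m N) (1\<^sub>m N) (0\<^sub>m N N)"

definition R_mat :: "nat \<Rightarrow> real \<Rightarrow> real \<Rightarrow> real \<Rightarrow> nat \<Rightarrow> (nat \<Rightarrow> real) \<Rightarrow> complex mat" where
  "R_mat N vel L Ls M c = Sigma_mat N -
     (let s = sigma_mat N vel L Ls M c in four_block_mat s s s s)"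

definition Omega_mat :: "nat \<Rightarrow> real \<Rightarrow> real \<Rightarrow> real \<Rightarrow> nat \<Rightarrow> (nat \<Rightarrow> real) \<Rightarrow> complex mat" where
  "Omega_mat N vel L Ls M c =
     (let r = rho_mat N vel L Ls M c; x = xi_mat N vel L Ls M c in four_block_mat r x x r)"

definition D_mat :: "nat \<Rightarrow> real \<Rightarrow> real \<Rightarrow> real \<Rightarrow> nat \<Rightarrow> (nat \<Rightarrow> real) \<Rightarrow> complex mat" where
  "D_mat N vel L Ls M c = the (mat_inverse (R_mat N vel L Ls M c)) * Omega_mat N vel L Ls M c"

definition conj_mat :: "complex mat \<Rightarrow> complex mat" where
  "conj_mat A = map_mat cnj A"

definition conj_vec :: "complex vec \<Rightarrow> complex vec" where
  "conj_vec x = map_vec cnj x"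

definition R_inner :: "complex mat \<Rightarrow> complex vec \<Rightarrow> complex vec \<Rightarrow> complex" where
  "R_inner R x y = conj_vec x \<bullet> (R *\<^sub>v y)"

(* normal mode transformation with numbers mu 0..N-1 (paper mu_1..mu_N) *)
definition normal_mode_transformation ::
  "nat \<Rightarrow> complex mat \<Rightarrow> complex mat \<Rightarrow> complex mat \<Rightarrow> (nat \<Rightarrow> real) \<Rightarrow> bool" where
  "normal_mode_transformation N R D T mu \<longleftrightarrow>
     T \<in> carrier_mat (2*N) (2*N) \<and>
     mat_adjoint T * R * T = Sigma_mat N \<and>
     T = Gamma_mat N * conj_mat T * Gamma_mat N \<and>
     (\<forall>n<N. mu n > 0) \<and>
     (Sigma_mat N * mat_adjoint T * R) * D * T =
        mat_diag (2*N) (\<lambda>k. if k < N then complex_of_real (mu k)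
                              else - complex_of_real (mu (k - N)))"

end

theory Submission
  imports Defs
begin

(* Let T have columns v_1, ..., v_N followed by their partners u_n = Gamma v_n^*. Two symmetries
   do all the work. First, R Gamma = - Gamma R^*, because swapping the two halves flips the sign of
   Sigma and fixes the purely imaginary sigma blocks; hence <u_n, u_n> = - <v_n, v_n>^* = -1, and
   with the orthogonality hypotheses T^H R T = Sigma. Second, Omega = R D is real and commutes with
   Gamma; together with the first symmetry this gives D u_n = - mu_n u_n. Since Gamma pairs the
   columns, T = Gamma T^* Gamma, and Sigma T^H R D T = Sigma (T^H R T) Lambda = Lambda. *)

lemma conj_vec_conjugate: "conj_vec x = conjugate x"
  unfolding conj_vec_def by (rule eq_vecI) auto

lemma R_inner_conjugate: "R_inner R x y = conjugate x \<bullet> (R *\<^sub>v y)"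
  unfolding R_inner_def conj_vec_conjugate ..

lemma conj_mat_carrier_mat [simp]: "A \<in> carrier_mat nr nc \<Longrightarrow> conj_mat A \<in> carrier_mat nr nc"
  unfolding conj_mat_def by simp

lemma dim_conj_mat [simp]: "dim_row (conj_mat A) = dim_row A" "dim_col (conj_mat A) = dim_col A"
  unfolding conj_mat_def by simp_all

lemma index_conj_mat [simp]:
  "i < dim_row A \<Longrightarrow> j < dim_col A \<Longrightarrow> conj_mat A $$ (i, j) = cnj (A $$ (i, j))"
  unfolding conj_mat_def by simp

lemma conjugate_mult_mat_vec:
  "A \<in> carrier_mat nr nc \<Longrightarrow> x \<in> carrier_vec nc \<Longrightarrow> conjugate (A *\<^sub>v x) = conj_mat A *\<^sub>v conjugate x"
  by (rule eq_vecI) (auto simp: scalar_prod_def intro!: sum.cong)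

lemma invertible_mat_mult_vec_cancel:
  fixes A :: "'a :: comm_ring_1 mat"
  assumes "invertible_mat A" "A \<in> carrier_mat n n" "x \<in> carrier_vec n" "y \<in> carrier_vec n"
    and "A *\<^sub>v x = A *\<^sub>v y"
  shows "x = y"
proof -
  obtain B where BA: "B * A = 1\<^sub>m (dim_row B)" and AB: "A * B = 1\<^sub>m n"
    using assms(1,2) unfolding invertible_mat_def inverts_mat_def by auto
  have B: "B \<in> carrier_mat n n"
    using arg_cong[OF AB, of dim_col] arg_cong[OF BA, of dim_col] assms(2) by auto
  have "x = (B * A) *\<^sub>v x" using BA B assms(3) by simp
  also have "\<dots> = (B * A) *\<^sub>v y" using assms B by (simp add: assoc_mult_mat_vec[of _ n n])
  also have "\<dots> = y" using BA B assms(4) by simp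
  finally show ?thesis .
qed

lemma mult_mat_inverse:
  fixes A :: "'a :: field mat"
  assumes A: "A \<in> carrier_mat n n" and "invertible_mat A"
  shows "A * the (mat_inverse A) = 1\<^sub>m n" "the (mat_inverse A) \<in> carrier_mat n n"
proof -
  obtain B where AB: "A * B = 1\<^sub>m n" and BA: "B * A = 1\<^sub>m (dim_row B)"
    using assms unfolding invertible_mat_def inverts_mat_def by auto
  have "B \<in> carrier_mat n n"
    using arg_cong[OF AB, of dim_col] arg_cong[OF BA, of dim_col] A by auto
  then have "A \<in> Units (ring_mat TYPE('a) n ())"
    unfolding Units_def ring_mat_def using A AB BA by auto
  then obtain Ai where "mat_inverse A = Some Ai"
    using mat_inverse(1)[OF A, where b="()"] by (cases "mat_inverse A") auto
  then show "A * the (mat_inverse A) = 1\<^sub>m n" "the (mat_inverse A) \<in> carrier_mat n n"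
    using mat_inverse(2)[OF A] by auto
qed

lemma mat_adjoint_carrier_mat: "T \<in> carrier_mat n m \<Longrightarrow> mat_adjoint T \<in> carrier_mat m n"
  unfolding mat_adjoint_def by (auto simp: mat_of_rows_def)

lemma row_mat_adjoint:
  "T \<in> carrier_mat n m \<Longrightarrow> j < m \<Longrightarrow> row (mat_adjoint T) j = conjugate (col T j)"
  unfolding mat_adjoint_def by (rule eq_vecI) (auto simp: mat_of_rows_def)

lemma index_mat_adjoint_mult_mult:
  assumes T: "T \<in> carrier_mat n m" and R: "R \<in> carrier_mat n n" and "j < m" "k < m"
  shows "(mat_adjoint T * R * T) $$ (j, k) = R_inner R (col T j) (col T k)"
proof -
  have "mat_adjoint T * R * T = mat_adjoint T * (R * T)"
    using mat_adjoint_carrier_mat[OF T] R T by (rule assoc_mult_mat)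
  then show ?thesis
    using assms mat_adjoint_carrier_mat[OF T] carrier_matD[OF R]
    by (simp add: row_mat_adjoint R_inner_conjugate mult_mat_vec_def)
qed

lemma mult_eq_mult_mat_diag:
  fixes D T :: "'a :: comm_ring_1 mat"
  assumes T: "T \<in> carrier_mat n n" and D: "D \<in> carrier_mat n n"
    and eig: "\<And>k. k < n \<Longrightarrow> D *\<^sub>v col T k = lam k \<cdot>\<^sub>v col T k"
  shows "D * T = T * mat_diag n lam"
proof (rule eq_matI)
  fix i k assume "i < dim_row (T * mat_diag n lam)" "k < dim_col (T * mat_diag n lam)"
  then have i: "i < n" and k: "k < n" using T by (auto simp: mat_diag_def)
  have "(D * T) $$ (i, k) = (D *\<^sub>v col T k) $ i" using D T i k by simp
  also have "\<dots> = lam k * T $$ (i, k)" using eig[OF k] T i k by simp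
  also have "\<dots> = (T * mat_diag n lam) $$ (i, k)"
    using T i k by (simp add: mat_diag_mult_right mult.commute)
  finally show "(D * T) $$ (i, k) = (T * mat_diag n lam) $$ (i, k)" .
qed (use T D in \<open>auto simp: mat_diag_def\<close>)

lemma gram_left_inverse_diagonalizes:
  fixes S TH R D T \<Lambda> :: "'a :: semiring_1 mat"
  assumes S: "S \<in> carrier_mat n n" and TH: "TH \<in> carrier_mat n n" and R: "R \<in> carrier_mat n n"
    and D: "D \<in> carrier_mat n n" and T: "T \<in> carrier_mat n n" and \<Lambda>: "\<Lambda> \<in> carrier_mat n n"
    and gram: "TH * R * T = S" and SS: "S * S = 1\<^sub>m n" and DT: "D * T = T * \<Lambda>"
  shows "S * TH * R * D * T = \<Lambda>"
proof -
  have "S * TH * R * D * T = (S * TH * R) * (T * \<Lambda>)"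
    unfolding DT[symmetric] using S TH R D T by (simp add: assoc_mult_mat[of _ n n _ n _ n])
  also have "\<dots> = (S * (TH * R * T)) * \<Lambda>"
    using S TH R T \<Lambda> by (simp add: assoc_mult_mat[of _ n n _ n _ n])
  finally show ?thesis unfolding gram SS using \<Lambda> by simp
qed

definition swap_half :: "nat \<Rightarrow> nat \<Rightarrow> nat" where
  "swap_half N i = (if i < N then i + N else i - N)"

lemma swap_half_less: "i < 2*N \<Longrightarrow> swap_half N i < 2*N"
  unfolding swap_half_def by auto

lemma swap_half_swap_half [simp]: "i < 2*N \<Longrightarrow> swap_half N (swap_half N i) = i"
  unfolding swap_half_def by auto

lemma swap_half_eq_iff: "i < 2*N \<Longrightarrow> j < 2*N \<Longrightarrow> j = swap_half N i \<longleftrightarrow> i = swap_half N j"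
  unfolding swap_half_def by auto

lemma bij_betw_swap_half: "bij_betw (swap_half N) {0..<2*N} {0..<2*N}"
  by (rule bij_betw_byWitness[where f'="swap_half N"]) (auto simp: swap_half_less)

lemma Gamma_mat_carrier [simp]: "Gamma_mat N \<in> carrier_mat (2*N) (2*N)"
  unfolding Gamma_mat_def by (auto simp: mult_2)

lemma dim_Gamma_mat [simp]: "dim_row (Gamma_mat N) = 2*N" "dim_col (Gamma_mat N) = 2*N"
  using Gamma_mat_carrier by blast+

lemma index_Gamma_mat:
  "i < 2*N \<Longrightarrow> j < 2*N \<Longrightarrow> Gamma_mat N $$ (i, j) = (if j = swap_half N i then 1 else 0)"
  unfolding Gamma_mat_def swap_half_def by auto

lemma conj_mat_Gamma_mat [simp]: "conj_mat (Gamma_mat N) = Gamma_mat N"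
  by (rule eq_matI) (auto simp: index_Gamma_mat)

lemma index_Gamma_mult_mat_vec:
  assumes "x \<in> carrier_vec (2*N)" "i < 2*N"
  shows "(Gamma_mat N *\<^sub>v x) $ i = x $ swap_half N i"
proof -
  have "(Gamma_mat N *\<^sub>v x) $ i = (\<Sum>j\<in>{0..<2*N}. (if j = swap_half N i then 1 else 0) * x $ j)"
    using assms by (auto simp: scalar_prod_def index_Gamma_mat intro!: sum.cong)
  also have "\<dots> = x $ swap_half N i"
    using assms(2) swap_half_less by (simp add: if_distrib[of "\<lambda>a. a * _"] cong: if_cong)
  finally show ?thesis .
qed

lemma index_Gamma_mult_mat:
  assumes "A \<in> carrier_mat (2*N) nc" "i < 2*N" "j < nc"
  shows "(Gamma_mat N * A) $$ (i, j) = A $$ (swap_half N i, j)"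
  using assms index_Gamma_mult_mat_vec[of "col A j" N i] swap_half_less[OF assms(2)] by simp

lemma index_mult_Gamma_mat:
  assumes "A \<in> carrier_mat nr (2*N)" "i < nr" "j < 2*N"
  shows "(A * Gamma_mat N) $$ (i, j) = A $$ (i, swap_half N j)"
proof -
  have "(A * Gamma_mat N) $$ (i, j) = (\<Sum>k\<in>{0..<2*N}. A $$ (i, k) * (if k = swap_half N j then 1 else 0))"
    using assms by (auto simp: scalar_prod_def index_Gamma_mat swap_half_eq_iff intro!: sum.cong)
  also have "\<dots> = A $$ (i, swap_half N j)"
    using assms(3) swap_half_less by (simp add: if_distrib[of "\<lambda>a. _ * a"] cong: if_cong)
  finally show ?thesis .
qed

lemma Gamma_mult_mat_vec_carrier [simp]:
  "x \<in> carrier_vec (2*N) \<Longrightarrow> Gamma_mat N *\<^sub>v x \<in> carrier_vec (2*N)"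
  by (rule mult_mat_vec_carrier) auto

lemma scalar_prod_Gamma_mult_mat_vec:
  assumes x: "x \<in> carrier_vec (2*N)" and y: "y \<in> carrier_vec (2*N)"
  shows "(Gamma_mat N *\<^sub>v x) \<bullet> (Gamma_mat N *\<^sub>v y) = x \<bullet> y"
proof -
  have "(Gamma_mat N *\<^sub>v x) \<bullet> (Gamma_mat N *\<^sub>v y)
      = (\<Sum>i\<in>{0..<2*N}. x $ swap_half N i * y $ swap_half N i)"
    unfolding scalar_prod_def[of "Gamma_mat N *\<^sub>v x"] using x y
    by (auto simp: index_Gamma_mult_mat_vec simp del: index_mult_mat_vec intro!: sum.cong)
  also have "\<dots> = (\<Sum>i\<in>{0..<2*N}. x $ i * y $ i)"
    using sum.reindex_bij_betw[OF bij_betw_swap_half[of N], of "\<lambda>i. x $ i * y $ i"] by simp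
  also have "\<dots> = x \<bullet> y" using y by (simp add: scalar_prod_def)
  finally show ?thesis .
qed

lemma Gamma_mult_Gamma_mult_mat_vec:
  assumes "x \<in> carrier_vec (2*N)"
  shows "Gamma_mat N *\<^sub>v (Gamma_mat N *\<^sub>v x) = x"
  by (rule eq_vecI)
    (use assms in \<open>simp_all add: index_Gamma_mult_mat_vec swap_half_less del: index_mult_mat_vec\<close>)

lemma R_inner_Gamma_mult_conj_vec:
  assumes R: "R \<in> carrier_mat (2*N) (2*N)" and RG: "R * Gamma_mat N = - (Gamma_mat N * conj_mat R)"
    and x: "x \<in> carrier_vec (2*N)" and y: "y \<in> carrier_vec (2*N)"
  shows "R_inner R (Gamma_mat N *\<^sub>v conj_vec x) (Gamma_mat N *\<^sub>v conj_vec y)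
    = - cnj (R_inner R x y)"
proof -
  let ?G = "Gamma_mat N"
  have cy: "conjugate y \<in> carrier_vec (2*N)" using y by simp
  have conj_Gx: "conjugate (?G *\<^sub>v conjugate x) = ?G *\<^sub>v x"
    using conjugate_mult_mat_vec[OF Gamma_mat_carrier, of "conjugate x" N] x by simp
  have "R *\<^sub>v (?G *\<^sub>v conjugate y) = (R * ?G) *\<^sub>v conjugate y"
    using assoc_mult_mat_vec[OF R Gamma_mat_carrier cy] ..
  also have "\<dots> = - (?G *\<^sub>v (conj_mat R *\<^sub>v conjugate y))"
    unfolding RG
    using assoc_mult_mat_vec[OF Gamma_mat_carrier conj_mat_carrier_mat[OF R] cy]
      carrier_matD[OF R] carrier_vecD[OF y]
    by simp
  also have "\<dots> = - (?G *\<^sub>v conjugate (R *\<^sub>v y))"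
    using conjugate_mult_mat_vec[OF R y] by simp
  finally have RGy: "R *\<^sub>v (?G *\<^sub>v conjugate y) = - (?G *\<^sub>v conjugate (R *\<^sub>v y))" .
  have "R_inner R (?G *\<^sub>v conj_vec x) (?G *\<^sub>v conj_vec y)
      = (?G *\<^sub>v x) \<bullet> - (?G *\<^sub>v conjugate (R *\<^sub>v y))"
    unfolding R_inner_conjugate conj_vec_conjugate conj_Gx RGy ..
  also have "\<dots> = - (x \<bullet> conjugate (R *\<^sub>v y))"
    using scalar_prod_Gamma_mult_mat_vec[OF x carrier_vec_conjugate[OF mult_mat_vec_carrier[OF R y]]] R
    by simp
  also have "x \<bullet> conjugate (R *\<^sub>v y) = cnj (conjugate x \<bullet> (R *\<^sub>v y))"
    using conjugate_sprod_vec[OF carrier_vec_conjugate[OF x] mult_mat_vec_carrier[OF R y]] by simp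
  finally show ?thesis unfolding R_inner_conjugate .
qed

lemma eigenvector_Gamma_mult_conj_vec:
  assumes R: "R \<in> carrier_mat (2*N) (2*N)" and D: "D \<in> carrier_mat (2*N) (2*N)"
    and R_inv: "invertible_mat R"
    and RG: "R * Gamma_mat N = - (Gamma_mat N * conj_mat R)"
    and RDG: "(R * D) * Gamma_mat N = Gamma_mat N * conj_mat (R * D)"
    and x: "x \<in> carrier_vec (2*N)" and Dx: "D *\<^sub>v x = l \<cdot>\<^sub>v x"
  shows "D *\<^sub>v (Gamma_mat N *\<^sub>v conj_vec x) = (- cnj l) \<cdot>\<^sub>v (Gamma_mat N *\<^sub>v conj_vec x)"
proof (rule invertible_mat_mult_vec_cancel[OF R_inv R])
  let ?G = "Gamma_mat N" and ?u = "Gamma_mat N *\<^sub>v conj_vec x"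
  have RD: "R * D \<in> carrier_mat (2*N) (2*N)" using R D by simp
  have cx: "conjugate x \<in> carrier_vec (2*N)" using x by simp
  have "R *\<^sub>v (D *\<^sub>v ?u) = ((R * D) * ?G) *\<^sub>v conjugate x"
    using assoc_mult_mat_vec[OF R D, of ?u] assoc_mult_mat_vec[OF RD Gamma_mat_carrier cx] x
    by (simp add: conj_vec_conjugate)
  also have "\<dots> = ?G *\<^sub>v conjugate ((R * D) *\<^sub>v x)"
    unfolding RDG conjugate_mult_mat_vec[OF RD x]
    using assoc_mult_mat_vec[OF Gamma_mat_carrier conj_mat_carrier_mat[OF RD] cx] .
  also have "(R * D) *\<^sub>v x = l \<cdot>\<^sub>v (R *\<^sub>v x)"
    using assoc_mult_mat_vec[OF R D x] mult_mat_vec[OF R x] Dx by simp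
  also have "?G *\<^sub>v conjugate (l \<cdot>\<^sub>v (R *\<^sub>v x)) = cnj l \<cdot>\<^sub>v ((?G * conj_mat R) *\<^sub>v conjugate x)"
    using assoc_mult_mat_vec[OF Gamma_mat_carrier conj_mat_carrier_mat[OF R] cx] cx
      mult_mat_vec[OF Gamma_mat_carrier mult_mat_vec_carrier[OF conj_mat_carrier_mat[OF R] cx]]
    by (simp add: conjugate_smult_vec conjugate_mult_mat_vec[OF R x]
        mult_mat_vec[OF conj_mat_carrier_mat[OF R] cx])
  also have "\<dots> = R *\<^sub>v ((- cnj l) \<cdot>\<^sub>v ?u)"
  proof -
    have "?G * conj_mat R = - (R * ?G)" unfolding RG by simp
    then show ?thesis
      using assoc_mult_mat_vec[OF R Gamma_mat_carrier cx] carrier_matD[OF R] carrier_vecD[OF x]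
        mult_mat_vec[OF R mult_mat_vec_carrier[OF Gamma_mat_carrier cx]]
      by (simp add: conj_vec_conjugate) (rule eq_vecI; simp)
  qed
  finally show "R *\<^sub>v (D *\<^sub>v ?u) = R *\<^sub>v ((- cnj l) \<cdot>\<^sub>v ?u)" .
qed (use D x in \<open>auto simp: conj_vec_conjugate\<close>)

lemma Sigma_mat_carrier [simp]: "Sigma_mat N \<in> carrier_mat (2*N) (2*N)"
  unfolding Sigma_mat_def by (auto simp: mult_2)

lemma dim_Sigma_mat [simp]: "dim_row (Sigma_mat N) = 2*N" "dim_col (Sigma_mat N) = 2*N"
  using Sigma_mat_carrier by blast+

lemma Sigma_mat_mat_diag: "Sigma_mat N = mat_diag (2*N) (\<lambda>i. if i < N then 1 else -1)"
  unfolding Sigma_mat_def by (rule eq_matI) (auto simp: mat_diag_def)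

lemma Sigma_mat_mult_Sigma_mat: "Sigma_mat N * Sigma_mat N = 1\<^sub>m (2*N)"
  unfolding Sigma_mat_mat_diag mat_diag_diag mat_diag_one[symmetric]
  by (rule arg_cong[where f="mat_diag _"]) auto

definition mode_vec :: "nat \<Rightarrow> (nat \<Rightarrow> complex vec) \<Rightarrow> nat \<Rightarrow> complex vec" where
  "mode_vec N vs k = (if k < N then vs k else Gamma_mat N *\<^sub>v conj_vec (vs (k - N)))"

definition mode_matrix :: "nat \<Rightarrow> (nat \<Rightarrow> complex vec) \<Rightarrow> complex mat" where
  "mode_matrix N vs = mat (2*N) (2*N) (\<lambda>(i, k). mode_vec N vs k $ i)"

context
  fixes N :: nat and vs :: "nat \<Rightarrow> complex vec"
  assumes vs_carrier: "\<And>n. n < N \<Longrightarrow> vs n \<in> carrier_vec (2*N)"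
begin

lemma mode_vec_carrier: "k < 2*N \<Longrightarrow> mode_vec N vs k \<in> carrier_vec (2*N)"
  unfolding mode_vec_def using vs_carrier by (auto simp: conj_vec_conjugate)

lemma col_mode_matrix: "k < 2*N \<Longrightarrow> col (mode_matrix N vs) k = mode_vec N vs k"
  unfolding mode_matrix_def using carrier_vecD[OF mode_vec_carrier] by (intro eq_vecI) auto

lemma mode_vec_swap_half:
  assumes k: "k < 2*N"
  shows "mode_vec N vs (swap_half N k) = Gamma_mat N *\<^sub>v conj_vec (mode_vec N vs k)"
proof (cases "k < N")
  case True
  then show ?thesis unfolding mode_vec_def swap_half_def by simp
next
  case False
  then have "k - N < N" using k by simp
  then show ?thesis
    using False vs_carrier[of "k - N"]
      conjugate_mult_mat_vec[OF Gamma_mat_carrier, of "conjugate (vs (k - N))" N]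
    unfolding mode_vec_def swap_half_def by (simp add: conj_vec_conjugate Gamma_mult_Gamma_mult_mat_vec)
qed

lemma mode_matrix_Gamma_conj:
  "mode_matrix N vs = Gamma_mat N * conj_mat (mode_matrix N vs) * Gamma_mat N"
proof (rule eq_matI)
  let ?T = "mode_matrix N vs" and ?G = "Gamma_mat N"
  have T: "?T \<in> carrier_mat (2*N) (2*N)" unfolding mode_matrix_def by simp
  fix i k assume "i < dim_row (?G * conj_mat ?T * ?G)" and "k < dim_col (?G * conj_mat ?T * ?G)"
  then have i: "i < 2*N" and k: "k < 2*N" by auto
  have "(?G * conj_mat ?T * ?G) $$ (i, k) = conj_mat ?T $$ (swap_half N i, swap_half N k)"
    using index_mult_Gamma_mat[OF mult_carrier_mat[OF Gamma_mat_carrier conj_mat_carrier_mat[OF T]] i k]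
      index_Gamma_mult_mat[OF conj_mat_carrier_mat[OF T] i swap_half_less[OF k]] by simp
  also have "\<dots> = cnj ((?G *\<^sub>v conjugate (mode_vec N vs k)) $ swap_half N i)"
    using T swap_half_less[OF i] swap_half_less[OF k] mode_vec_swap_half[OF k]
    unfolding mode_matrix_def by (simp add: conj_vec_conjugate del: index_mult_mat_vec)
  also have "\<dots> = ?T $$ (i, k)"
    using i k swap_half_less[OF i] mode_vec_carrier[OF k]
    unfolding mode_matrix_def by (simp add: index_Gamma_mult_mat_vec del: index_mult_mat_vec)
  finally show "?T $$ (i, k) = (?G * conj_mat ?T * ?G) $$ (i, k)" ..
qed (auto simp: mode_matrix_def)

lemma mode_matrix_carrier: "mode_matrix N vs \<in> carrier_mat (2*N) (2*N)"
  unfolding mode_matrix_def by simp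

lemma mat_adjoint_mode_matrix_R_mode_matrix:
  assumes R: "R \<in> carrier_mat (2*N) (2*N)" and RG: "R * Gamma_mat N = - (Gamma_mat N * conj_mat R)"
    and orth: "\<forall>j<2*N. \<forall>k<2*N. j \<noteq> k \<longrightarrow> R_inner R (mode_vec N vs j) (mode_vec N vs k) = 0"
    and norm: "\<forall>n<N. R_inner R (vs n) (vs n) = 1"
  shows "mat_adjoint (mode_matrix N vs) * R * mode_matrix N vs = Sigma_mat N"
proof (rule eq_matI)
  fix j k assume "j < dim_row (Sigma_mat N)" and "k < dim_col (Sigma_mat N)"
  then have j: "j < 2*N" and k: "k < 2*N" by simp_all
  have "(mat_adjoint (mode_matrix N vs) * R * mode_matrix N vs) $$ (j, k)
      = R_inner R (mode_vec N vs j) (mode_vec N vs k)"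
    using index_mat_adjoint_mult_mult[OF mode_matrix_carrier R j k]
    by (simp add: col_mode_matrix[OF j] col_mode_matrix[OF k])
  also have "\<dots> = Sigma_mat N $$ (j, k)"
  proof (cases "j = k")
    case False
    then show ?thesis using orth j k by (simp add: Sigma_mat_mat_diag mat_diag_def)
  next
    case True
    have "R_inner R (mode_vec N vs k) (mode_vec N vs k) = (if k < N then 1 else -1)"
      using norm k R_inner_Gamma_mult_conj_vec[OF R RG vs_carrier vs_carrier, of "k - N" "k - N"]
      unfolding mode_vec_def by simp
    then show ?thesis using True k by (simp add: Sigma_mat_mat_diag mat_diag_def)
  qed
  finally show "(mat_adjoint (mode_matrix N vs) * R * mode_matrix N vs) $$ (j, k)
      = Sigma_mat N $$ (j, k)" .
qed (use mode_matrix_carrier mat_adjoint_carrier_mat[OF mode_matrix_carrier] in auto)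

theorem normal_mode_transformation_mode_matrix:
  assumes R: "R \<in> carrier_mat (2*N) (2*N)" and D: "D \<in> carrier_mat (2*N) (2*N)"
    and R_inv: "invertible_mat R"
    and RG: "R * Gamma_mat N = - (Gamma_mat N * conj_mat R)"
    and RDG: "(R * D) * Gamma_mat N = Gamma_mat N * conj_mat (R * D)"
    and orth: "\<forall>j<2*N. \<forall>k<2*N. j \<noteq> k \<longrightarrow> R_inner R (mode_vec N vs j) (mode_vec N vs k) = 0"
    and norm: "\<forall>n<N. R_inner R (vs n) (vs n) = 1"
    and mu_eig: "\<forall>n<N. D *\<^sub>v vs n = complex_of_real (mu n) \<cdot>\<^sub>v vs n"
    and mu_pos: "\<forall>n<N. mu n > 0"
  shows "normal_mode_transformation N R D (mode_matrix N vs) mu"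
proof -
  let ?T = "mode_matrix N vs" and ?S = "Sigma_mat N"
  define \<Lambda> where
    "\<Lambda> = mat_diag (2*N) (\<lambda>k. if k < N then complex_of_real (mu k) else - complex_of_real (mu (k - N)))"
  have T: "?T \<in> carrier_mat (2*N) (2*N)" by (rule mode_matrix_carrier)
  have TH: "mat_adjoint ?T \<in> carrier_mat (2*N) (2*N)" using mat_adjoint_carrier_mat[OF T] .
  have \<Lambda>: "\<Lambda> \<in> carrier_mat (2*N) (2*N)" unfolding \<Lambda>_def by simp
  have gram: "mat_adjoint ?T * R * ?T = ?S"
    using mat_adjoint_mode_matrix_R_mode_matrix[OF R RG orth norm] .
  have "D * ?T = ?T * \<Lambda>"
    unfolding \<Lambda>_def
  proof (rule mult_eq_mult_mat_diag[OF T D])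
    fix k assume k: "k < 2*N"
    show "D *\<^sub>v col ?T k
      = (if k < N then complex_of_real (mu k) else - complex_of_real (mu (k - N))) \<cdot>\<^sub>v col ?T k"
    proof (cases "k < N")
      case True
      then show ?thesis using mu_eig col_mode_matrix[OF k] by (simp add: mode_vec_def)
    next
      case False
      then have "k - N < N" using k by simp
      then show ?thesis
        using False mu_eig col_mode_matrix[OF k]
          eigenvector_Gamma_mult_conj_vec[OF R D R_inv RG RDG vs_carrier, of "k - N" "of_real (mu (k - N))"]
        by (simp add: mode_vec_def)
    qed
  qed
  then have "?S * mat_adjoint ?T * R * D * ?T = \<Lambda>"
    by (rule gram_left_inverse_diagonalizes[OF Sigma_mat_carrier TH R D T \<Lambda> gram
          Sigma_mat_mult_Sigma_mat])
  then show ?thesis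
    unfolding normal_mode_transformation_def \<Lambda>_def
    using T gram mode_matrix_Gamma_conj mu_pos by blast
qed

end

lemma sigma_mat_carrier [simp]: "sigma_mat N vel L Ls M c \<in> carrier_mat N N"
  unfolding sigma_mat_def by simp

lemma dim_sigma_mat [simp]:
  "dim_row (sigma_mat N vel L Ls M c) = N" "dim_col (sigma_mat N vel L Ls M c) = N"
  using sigma_mat_carrier by blast+

lemma cnj_index_sigma_mat:
  "i < N \<Longrightarrow> j < N \<Longrightarrow> cnj (sigma_mat N vel L Ls M c $$ (i, j)) = - sigma_mat N vel L Ls M c $$ (i, j)"
  unfolding sigma_mat_def Let_def by simp

lemma R_mat_carrier [simp]: "R_mat N vel L Ls M c \<in> carrier_mat (2*N) (2*N)"
  unfolding R_mat_def Let_def by (rule minus_carrier_mat) (auto simp: mult_2)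

lemma dim_R_mat [simp]:
  "dim_row (R_mat N vel L Ls M c) = 2*N" "dim_col (R_mat N vel L Ls M c) = 2*N"
  using R_mat_carrier by blast+

lemma index_R_mat:
  assumes "i < 2*N" "j < 2*N"
  shows "R_mat N vel L Ls M c $$ (i, j) = (if i = j then if i < N then 1 else -1 else 0)
    - sigma_mat N vel L Ls M c $$ (if i < N then i else i - N, if j < N then j else j - N)"
  unfolding R_mat_def Let_def Sigma_mat_def using assms
  by (subst index_minus_mat) (auto simp: mult_2)

lemma index_R_mat_swap_half:
  assumes i: "i < 2*N" and j: "j < 2*N"
  shows "R_mat N vel L Ls M c $$ (swap_half N i, swap_half N j) = - cnj (R_mat N vel L Ls M c $$ (i, j))"
proof -
  have half: "(if swap_half N k < N then swap_half N k else swap_half N k - N)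
      = (if k < N then k else k - N)" if "k < 2*N" for k
    using that unfolding swap_half_def by auto
  have "cnj (sigma_mat N vel L Ls M c $$ (if i < N then i else i - N, if j < N then j else j - N))
     = - sigma_mat N vel L Ls M c $$ (if i < N then i else i - N, if j < N then j else j - N)"
    using i j by (intro cnj_index_sigma_mat) auto
  then show ?thesis
    unfolding index_R_mat[OF swap_half_less[OF i] swap_half_less[OF j]] index_R_mat[OF i j]
      half[OF i] half[OF j]
    using i j by (auto simp: swap_half_def)
qed

lemma R_mat_mult_Gamma_mat:
  "R_mat N vel L Ls M c * Gamma_mat N = - (Gamma_mat N * conj_mat (R_mat N vel L Ls M c))"
  (is "?R * ?G = - (?G * conj_mat ?R)")
proof (rule eq_matI)
  fix i j assume "i < dim_row (- (?G * conj_mat ?R))" and "j < dim_col (- (?G * conj_mat ?R))"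
  then have i: "i < 2*N" and j: "j < 2*N" by auto
  have "(?R * ?G) $$ (i, j) = ?R $$ (swap_half N (swap_half N i), swap_half N j)"
    using index_mult_Gamma_mat[OF R_mat_carrier i j] i by simp
  also have "\<dots> = - cnj (?R $$ (swap_half N i, j))"
    using index_R_mat_swap_half[OF swap_half_less[OF i] j] .
  also have "\<dots> = (- (?G * conj_mat ?R)) $$ (i, j)"
    using index_Gamma_mult_mat[OF conj_mat_carrier_mat[OF R_mat_carrier[of N vel L Ls M c]] i j]
      swap_half_less[OF i] i j by simp
  finally show "(?R * ?G) $$ (i, j) = (- (?G * conj_mat ?R)) $$ (i, j)" .
qed auto

lemma Omega_mat_carrier [simp]: "Omega_mat N vel L Ls M c \<in> carrier_mat (2*N) (2*N)"
  unfolding Omega_mat_def Let_def rho_mat_def xi_mat_def by (auto simp: mult_2)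

lemma dim_Omega_mat [simp]:
  "dim_row (Omega_mat N vel L Ls M c) = 2*N" "dim_col (Omega_mat N vel L Ls M c) = 2*N"
  using Omega_mat_carrier by blast+

lemma index_Omega_mat_swap_half:
  "i < 2*N \<Longrightarrow> j < 2*N \<Longrightarrow>
    Omega_mat N vel L Ls M c $$ (swap_half N i, swap_half N j) = cnj (Omega_mat N vel L Ls M c $$ (i, j))"
  using swap_half_less[of i N] swap_half_less[of j N]
  unfolding Omega_mat_def Let_def rho_mat_def xi_mat_def mat_diag_def
  by (auto simp: swap_half_def)

lemma Omega_mat_mult_Gamma_mat:
  "Omega_mat N vel L Ls M c * Gamma_mat N = Gamma_mat N * conj_mat (Omega_mat N vel L Ls M c)"
  (is "?O * ?G = ?G * conj_mat ?O")
proof (rule eq_matI)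
  fix i j assume "i < dim_row (?G * conj_mat ?O)" and "j < dim_col (?G * conj_mat ?O)"
  then have i: "i < 2*N" and j: "j < 2*N" by auto
  have "(?O * ?G) $$ (i, j) = ?O $$ (swap_half N (swap_half N i), swap_half N j)"
    using index_mult_Gamma_mat[OF Omega_mat_carrier i j] i by simp
  also have "\<dots> = cnj (?O $$ (swap_half N i, j))"
    using index_Omega_mat_swap_half[OF swap_half_less[OF i] j] .
  also have "\<dots> = (?G * conj_mat ?O) $$ (i, j)"
    using index_Gamma_mult_mat[OF conj_mat_carrier_mat[OF Omega_mat_carrier] i j] swap_half_less[OF i] j
    by simp
  finally show "(?O * ?G) $$ (i, j) = (?G * conj_mat ?O) $$ (i, j)" .
qed auto

lemma D_mat_carrier:
  assumes "invertible_mat (R_mat N vel L Ls M c)"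
  shows "D_mat N vel L Ls M c \<in> carrier_mat (2*N) (2*N)"
  unfolding D_mat_def using mult_mat_inverse(2)[OF R_mat_carrier assms] Omega_mat_carrier
  by (rule mult_carrier_mat)

lemma R_mat_mult_D_mat:
  assumes "invertible_mat (R_mat N vel L Ls M c)"
  shows "R_mat N vel L Ls M c * D_mat N vel L Ls M c = Omega_mat N vel L Ls M c"
  using mult_mat_inverse[OF R_mat_carrier assms]
  unfolding D_mat_def
  by (simp add: assoc_mult_mat[symmetric, of _ "2*N" "2*N" _ "2*N" _ "2*N"]
      left_mult_one_mat[OF Omega_mat_carrier])

theorem lemma3:
  fixes N M :: nat and vel L Ls :: real and c :: "nat \<Rightarrow> real"
    and vs :: "nat \<Rightarrow> complex vec" and mu :: "nat \<Rightarrow> real"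
  assumes N1: "N \<ge> 1" and vel: "\<bar>vel\<bar> < 1" and L: "L > 0" and Ls: "Ls \<ge> 0"
    and M1: "M \<ge> 1" and c1: "c 1 = 1"
    and nondeg: "\<forall>n\<in>{1..N}. (Fk M c Ls (kn L n))\<^sup>2 \<noteq> vel\<^sup>2 * (kn L n)\<^sup>2"
    and Rinv: "invertible_mat (R_mat N vel L Ls M c)"
    and vs_dim: "\<forall>n<N. vs n \<in> carrier_vec (2*N)"
    and eig: "\<forall>k<2*N. \<exists>lam. eigenvector (D_mat N vel L Ls M c)
               (if k < N then vs k else Gamma_mat N *\<^sub>v conj_vec (vs (k - N))) lam"
    and orth: "\<forall>j<2*N. \<forall>k<2*N. j \<noteq> k \<longrightarrow>
               R_inner (R_mat N vel L Ls M c)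
                 (if j < N then vs j else Gamma_mat N *\<^sub>v conj_vec (vs (j - N)))
                 (if k < N then vs k else Gamma_mat N *\<^sub>v conj_vec (vs (k - N))) = 0"
    and norm: "\<forall>n<N. R_inner (R_mat N vel L Ls M c) (vs n) (vs n) = 1"
    and mu_eig: "\<forall>n<N. eigenvector (D_mat N vel L Ls M c) (vs n) (complex_of_real (mu n))"
    and mu_pos: "\<forall>n<N. mu n > 0"
  shows "\<exists>T. normal_mode_transformation N (R_mat N vel L Ls M c) (D_mat N vel L Ls M c) T mu"
proof -
  have vs: "vs n \<in> carrier_vec (2*N)" if "n < N" for n
    using vs_dim that by simp
  have RDG: "R_mat N vel L Ls M c * D_mat N vel L Ls M c * Gamma_mat N
      = Gamma_mat N * conj_mat (R_mat N vel L Ls M c * D_mat N vel L Ls M c)"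
    unfolding R_mat_mult_D_mat[OF Rinv] by (rule Omega_mat_mult_Gamma_mat)
  have orth': "\<forall>j<2*N. \<forall>k<2*N. j \<noteq> k \<longrightarrow>
      R_inner (R_mat N vel L Ls M c) (mode_vec N vs j) (mode_vec N vs k) = 0"
    using orth unfolding mode_vec_def .
  have mu_eig': "\<forall>n<N. D_mat N vel L Ls M c *\<^sub>v vs n = complex_of_real (mu n) \<cdot>\<^sub>v vs n"
    using mu_eig unfolding eigenvector_def by blast
  have "normal_mode_transformation N (R_mat N vel L Ls M c) (D_mat N vel L Ls M c) (mode_matrix N vs) mu"
    by (rule normal_mode_transformation_mode_matrix[OF vs R_mat_carrier D_mat_carrier[OF Rinv] Rinv
          R_mat_mult_Gamma_mat RDG orth' norm mu_eig' mu_pos])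
  then show ?thesis ..
qed

end
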